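(* Let $n\in(0,1)$, let $I=(0,\infty)$ and $\lambda(z)=z^{-n}$, and fix a sign $\pm$. Then there exists $c>0$ with $8c^2(1\pm c^{-n})=n(1-n)$, and for every such $c$ and every $b\in\mathbb{R}$ the Legendre curve $\gamma_{\{b,c\}}(s)=(b,s,c)$ in $\tilde M(1-\lambda^2,2(1\pm\lambda))$ is proper biharmonic.
   Context: Definition of $\tilde M(1-\lambda^2,2(1\pm\lambda))$: Let $\lambda:I\to\mathbb{R}$ be a non-constant positive smooth function on an open interval $I$, $\lambda'=d\lambda/dz$. On $\tilde M^3=\mathbb{R}^2\times I\subset\mathbb{R}^3$ with coordinates $(x,y,z)$ consider the vector fields $e_1=\partial_x$, $e_2=\partial_y$, $e_3=(\pm 2y+f(z))\partial_x+\big(2\lambda x-\frac{\lambda'}{2\lambda}y+h(z)\big)\partial_y+\partial_z$, where $f,h$ are arbitrary smooth functions of $z$. Let $g$ be the Riemannian metric with $g(e_i,e_j)=\delta_{ij}$, $\xi=e_1$, $\eta$ the $1$-form dual to $e_1$, and $\phi$ the $(1,1)$-tensor with $\phi e_1=0$, $\phi e_2=\pm e_3$, $\phi e_3=\mp e_2$ (all double signs correspond to the sign in $\pm 2y$). This is a contact metric manifold which is a generalized $(\kappa,\mu)$-manifold with $\kappa=1-\lambda^2$, $\mu=2(1\pm\lambda)$. A curve parametrized by arclength is Legendre if $\eta(\gamma')=0$. A curve (isometric immersion) is biharmonic if its bitension field $\tau_2=-\Delta\tau+\mathrm{trace}\,\tilde R(\tau,d\gamma)d\gamma$ vanishes, equivalently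 $\tilde\nabla_T\tilde\nabla_T\tilde\nabla_T T+\tilde R(\tilde\nabla_T T,T)T=0$ for the unit tangent $T$, with $\tilde R(X,Y)=[\tilde\nabla_X,\tilde\nabla_Y]-\tilde\nabla_{[X,Y]}$; it is proper biharmonic if it is biharmonic and not a geodesic. *)

theory Defs
  imports "HOL-Analysis.Analysis"
begin

text \<open>Coordinates on R^3 are indexed 0 (x), 1 (y), 2 (z). Points and tangent
vectors (components w.r.t. the coordinate fields d/dx, d/dy, d/dz) are
represented as functions nat => real, supported on indices < 3.
A global frame E assigns to a point p the coordinate components E p i of the
vector field e_(i+1), i < 3.\<close>

type_synonym vec = "nat \<Rightarrow> real"
type_synonym frame = "vec \<Rightarrow> nat \<Rightarrow> vec"

definition unitv :: "nat \<Rightarrow> vec" where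
  "unitv j = (\<lambda>k. if k = j then 1 else 0)"

definition pd :: "(vec \<Rightarrow> real) \<Rightarrow> nat \<Rightarrow> vec \<Rightarrow> real" where
  "pd F i p = deriv (\<lambda>t. F (p(i := p i + t))) 0"

definition frame_coeffs :: "frame \<Rightarrow> vec \<Rightarrow> vec \<Rightarrow> vec" where
  "frame_coeffs E p X = (THE a. (\<forall>k<3. X k = (\<Sum>i<3. a i * E p i k)) \<and> (\<forall>i\<ge>3. a i = 0))"

text \<open>The Riemannian metric for which the frame E is orthonormal:
g(X,Y) = sum of products of frame components; metric coefficients g_jl.\<close>
definition gmat :: "frame \<Rightarrow> vec \<Rightarrow> nat \<Rightarrow> nat \<Rightarrow> real" where
  "gmat E p j l = (\<Sum>i<3. frame_coeffs E p (unitv j) i * frame_coeffs E p (unitv l) i)"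

definition ginner :: "frame \<Rightarrow> vec \<Rightarrow> vec \<Rightarrow> vec \<Rightarrow> real" where
  "ginner E p X Y = (\<Sum>j<3. \<Sum>l<3. gmat E p j l * X j * Y l)"

definition ginv :: "frame \<Rightarrow> vec \<Rightarrow> nat \<Rightarrow> nat \<Rightarrow> real" where
  "ginv E p = (THE H. (\<forall>j<3. \<forall>l<3. (\<Sum>m<3. gmat E p j m * H m l) = (if j = l then 1 else 0))
                    \<and> (\<forall>j l. (3 \<le> j \<or> 3 \<le> l) \<longrightarrow> H j l = 0))"

definition christ :: "frame \<Rightarrow> vec \<Rightarrow> nat \<Rightarrow> nat \<Rightarrow> nat \<Rightarrow> real" where
  "christ E p k i j = (1/2) * (\<Sum>l<3. ginv E p k l *
      (pd (\<lambda>q. gmat E q j l) i p + pd (\<lambda>q. gmat E q i l) j p - pd (\<lambda>q. gmat E q i j) l p))"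

text \<open>Riemann tensor R(d_i,d_j)d_k = sum_l R^l_ijk d_l with
R(X,Y) = [nabla_X, nabla_Y] - nabla_[X,Y].\<close>
definition riem :: "frame \<Rightarrow> vec \<Rightarrow> nat \<Rightarrow> nat \<Rightarrow> nat \<Rightarrow> nat \<Rightarrow> real" where
  "riem E p l i j k = pd (\<lambda>q. christ E q l j k) i p - pd (\<lambda>q. christ E q l i k) j p
     + (\<Sum>m<3. christ E p l i m * christ E p m j k - christ E p l j m * christ E p m i k)"

definition curv :: "frame \<Rightarrow> vec \<Rightarrow> vec \<Rightarrow> vec \<Rightarrow> vec \<Rightarrow> vec" where
  "curv E p X Y Z = (\<lambda>l. \<Sum>i<3. \<Sum>j<3. \<Sum>k<3. riem E p l i j k * X i * Y j * Z k)"

definition vel :: "(real \<Rightarrow> vec) \<Rightarrow> real \<Rightarrow> vec" where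
  "vel \<gamma> s = (\<lambda>k. deriv (\<lambda>t. \<gamma> t k) s)"

definition cov :: "frame \<Rightarrow> (real \<Rightarrow> vec) \<Rightarrow> (real \<Rightarrow> vec) \<Rightarrow> real \<Rightarrow> vec" where
  "cov E \<gamma> V s = (\<lambda>k. deriv (\<lambda>t. V t k) s
       + (\<Sum>i<3. \<Sum>j<3. christ E (\<gamma> s) k i j * vel \<gamma> s i * V s j))"

definition biharmonic :: "frame \<Rightarrow> (real \<Rightarrow> vec) \<Rightarrow> bool" where
  "biharmonic E \<gamma> \<longleftrightarrow>
     (let T = vel \<gamma>; T1 = cov E \<gamma> T; T2 = cov E \<gamma> T1; T3 = cov E \<gamma> T2
      in \<forall>s. \<forall>k<3. T3 s k + curv E (\<gamma> s) (T1 s) (T s) (T s) k = 0)"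

definition geodesic :: "frame \<Rightarrow> (real \<Rightarrow> vec) \<Rightarrow> bool" where
  "geodesic E \<gamma> \<longleftrightarrow> (\<forall>s. \<forall>k<3. cov E \<gamma> (vel \<gamma>) s k = 0)"

definition proper_biharmonic :: "frame \<Rightarrow> (real \<Rightarrow> vec) \<Rightarrow> bool" where
  "proper_biharmonic E \<gamma> \<longleftrightarrow> biharmonic E \<gamma> \<and> \<not> geodesic E \<gamma>"

text \<open>Arclength-parametrized Legendre curve: g(gamma',gamma') = 1 and
eta(gamma') = g(xi, gamma') = 0 with xi = e_1.\<close>
definition legendre_curve :: "frame \<Rightarrow> (real \<Rightarrow> vec) \<Rightarrow> bool" where
  "legendre_curve E \<gamma> \<longleftrightarrow>
     (\<forall>s. ginner E (\<gamma> s) (vel \<gamma> s) (vel \<gamma> s) = 1 \<and> ginner E (\<gamma> s) (E (\<gamma> s) 0) (vel \<gamma> s) = 0)"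

text \<open>The frame e_1, e_2, e_3 of M(1-lambda^2, 2(1 +- lambda)); sg = +1 or -1
is the sign.\<close>
definition kmu_frame :: "real \<Rightarrow> (real \<Rightarrow> real) \<Rightarrow> (real \<Rightarrow> real) \<Rightarrow> (real \<Rightarrow> real) \<Rightarrow> frame" where
  "kmu_frame sg lam f h p i =
     (if i = 0 then unitv 0
      else if i = 1 then unitv 1
      else if i = 2 then
        (\<lambda>k. if k = 0 then sg * 2 * p 1 + f (p 2)
             else if k = 1 then 2 * lam (p 2) * p 0 - deriv lam (p 2) / (2 * lam (p 2)) * p 1 + h (p 2)
             else if k = 2 then 1 else 0)
      else (\<lambda>k. 0))"

definition smooth_pos :: "(real \<Rightarrow> real) \<Rightarrow> bool" where
  "smooth_pos f \<longleftrightarrow> (\<forall>m. \<forall>z>0. ((deriv ^^ m) f) differentiable (at z))"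

definition gamma_bc :: "real \<Rightarrow> real \<Rightarrow> real \<Rightarrow> vec" where
  "gamma_bc b c s = (\<lambda>k. if k = 0 then b else if k = 1 then s else if k = 2 then c else 0)"

end

theory Submission
  imports Defs
begin

(* Along gamma(s) = (b, s, c) the unit tangent is T = e2 = d/dy. In the coordinates (x, y, z) the
   Levi-Civita connection of the metric making (e1, e2, e3) orthonormal gives nabla_T T = a e3 with
   a = lambda'/(2 lambda) taken at z = c, and differentiating twice more and adding R(nabla_T T, T) T
   yields the bitension field a (a' - 2 a^2 - 4 - 4 sg lambda) e3. Hence gamma is proper biharmonic
   iff a(c) <> 0 and a'(c) = 2 a(c)^2 + 4 + 4 sg lambda(c). For lambda = z^(-n) one has a = -n/(2z),
   and the condition becomes 8 c^2 (1 + sg c^(-n)) = n (1 - n), whose left side runs from below to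
   above n (1 - n) on (0, oo), so the intermediate value theorem supplies a solution c > 0. *)

lemma sum_lessThan_3: "(\<Sum>m::nat<3. g m) = g 0 + g 1 + (g 2 :: 'a :: comm_monoid_add)"
  by (simp add: eval_nat_numeral add.assoc)

lemma less_3_iff: "(k::nat) < 3 \<longleftrightarrow> k = 0 \<or> k = 1 \<or> k = 2"
  by auto

lemma all_less_3: "(\<forall>k::nat<3. P k) \<longleftrightarrow> P 0 \<and> P 1 \<and> P 2"
  by (auto simp: less_3_iff)

lemma right_inverse_eq_left_inverse:
  fixes G K H :: "nat \<Rightarrow> nat \<Rightarrow> real"
  assumes left: "\<And>j l. j < n \<Longrightarrow> l < n \<Longrightarrow> (\<Sum>m<n. K j m * G m l) = (if j = l then 1 else 0)"
    and right: "\<And>j l. j < n \<Longrightarrow> l < n \<Longrightarrow> (\<Sum>m<n. G j m * H m l) = (if j = l then 1 else 0)"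
    and "j < n" "l < n"
  shows "H j l = K j l"
proof -
  have "H j l = (\<Sum>m<n. if j = m then H m l else 0)"
    using \<open>j < n\<close> by simp
  also have "\<dots> = (\<Sum>m<n. (\<Sum>r<n. K j r * G r m) * H m l)"
    using left[OF \<open>j < n\<close>] by (intro sum.cong) auto
  also have "\<dots> = (\<Sum>r<n. K j r * (\<Sum>m<n. G r m * H m l))"
    unfolding sum_distrib_left sum_distrib_right mult.assoc by (rule sum.swap)
  also have "\<dots> = (\<Sum>r<n. if r = l then K j r else 0)"
    using right[OF _ \<open>l < n\<close>] by (intro sum.cong) auto
  also have "\<dots> = K j l"
    using \<open>l < n\<close> by simp
  finally show ?thesis .
qed

lemma pd_eqI: "((\<lambda>t. F (p(i := p i + t))) has_real_derivative D) (at 0) \<Longrightarrow> pd F i p = D"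
  unfolding pd_def by (rule DERIV_imp_deriv)

lemma has_real_derivative_shift_coordinate:
  "((\<lambda>t. (p(i := p i + t)) k) has_real_derivative (if k = i then 1 else 0)) (at 0)"
  by (cases "k = i") (auto intro!: derivative_eq_intros)

lemma has_real_derivative_comp_shift_coordinate:
  fixes p :: vec
  assumes "(\<phi> has_real_derivative d) (at (p j))"
  shows "((\<lambda>t. \<phi> ((p(i := p i + t)) j)) has_real_derivative (if i = j then d else 0)) (at 0)"
proof (cases "i = j")
  case True
  have "((\<lambda>t. \<phi> (t + p j)) has_real_derivative d) (at 0)"
    using assms DERIV_shift[of \<phi> d 0 "p j"] by simp
  then show ?thesis using True by (simp add: add.commute)
qed simp

lemma pd_cong_pos:
  assumes "\<And>q. q j > 0 \<Longrightarrow> F q = G q" and "p j > 0"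
  shows "pd F i p = pd G i p"
  unfolding pd_def
proof (rule deriv_cong_ev)
  have "eventually (\<lambda>t. t \<in> {- p j <..}) (nhds (0::real))"
    using assms(2) by (intro eventually_nhds_in_open) auto
  then show "\<forall>\<^sub>F t in nhds 0. F (p(i := p i + t)) = G (p(i := p i + t))"
  proof (rule eventually_mono)
    fix t :: real assume "t \<in> {- p j <..}"
    then have "(p(i := p i + t)) j > 0" using assms(2) by (cases "i = j") auto
    then show "F (p(i := p i + t)) = G (p(i := p i + t))" using assms(1) by blast
  qed
qed simp

definition bitension :: "frame \<Rightarrow> (real \<Rightarrow> vec) \<Rightarrow> real \<Rightarrow> vec" where
  "bitension E \<gamma> s = (\<lambda>k. cov E \<gamma> (cov E \<gamma> (cov E \<gamma> (vel \<gamma>))) s k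
     + curv E (\<gamma> s) (cov E \<gamma> (vel \<gamma>) s) (vel \<gamma> s) (vel \<gamma> s) k)"

lemma biharmonic_iff_bitension: "biharmonic E \<gamma> \<longleftrightarrow> (\<forall>s. \<forall>k<3. bitension E \<gamma> s k = 0)"
  by (simp add: biharmonic_def bitension_def Let_def)

lemma vel_gamma_bc: "vel (gamma_bc b c) = (\<lambda>s. unitv 1)"
proof (intro ext)
  fix s k show "vel (gamma_bc b c) s k = unitv 1 k"
  proof (cases "k = 1")
    case True then show ?thesis unfolding vel_def gamma_bc_def unitv_def
      by (auto intro!: DERIV_imp_deriv derivative_eq_intros)
  next
    case False
    then have "(\<lambda>t. gamma_bc b c t k) = (\<lambda>t. gamma_bc b c 0 k)" by (auto simp: gamma_bc_def)
    then show ?thesis unfolding vel_def using False by (simp add: unitv_def)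
  qed
qed

locale generalized_kmu_space =
  fixes sg :: real and lam f h lam' a' f' h' :: "real \<Rightarrow> real"
  assumes sign: "sg = 1 \<or> sg = -1"
    and lam_deriv: "\<And>z. z > 0 \<Longrightarrow> (lam has_real_derivative lam' z) (at z)"
    and a_deriv: "\<And>z. z > 0 \<Longrightarrow> ((\<lambda>z. deriv lam z / (2 * lam z)) has_real_derivative a' z) (at z)"
    and f_deriv: "\<And>z. z > 0 \<Longrightarrow> (f has_real_derivative f' z) (at z)"
    and h_deriv: "\<And>z. z > 0 \<Longrightarrow> (h has_real_derivative h' z) (at z)"
begin

abbreviation E :: frame where "E \<equiv> kmu_frame sg lam f h"

definition a :: "real \<Rightarrow> real" where "a z = deriv lam z / (2 * lam z)"

lemma a_has_derivative: "z > 0 \<Longrightarrow> (a has_real_derivative a' z) (at z)"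
  using a_deriv unfolding a_def[abs_def] .

definition e3x :: "vec \<Rightarrow> real" where "e3x p = sg * 2 * p 1 + f (p 2)"
definition e3y :: "vec \<Rightarrow> real" where "e3y p = 2 * lam (p 2) * p 0 - a (p 2) * p 1 + h (p 2)"

definition e3 :: "vec \<Rightarrow> vec" where
  "e3 p = (\<lambda>k. if k = 0 then e3x p else if k = 1 then e3y p else if k = 2 then 1 else 0)"

lemma kmu_frame_eq:
  "E p i = (if i = 0 then unitv 0 else if i = 1 then unitv 1 else if i = 2 then e3 p else (\<lambda>k. 0))"
  unfolding kmu_frame_def e3_def e3x_def e3y_def a_def by (auto simp: fun_eq_iff)

lemma frame_coeffs_eq:
  "frame_coeffs E p X = (\<lambda>k. if k = 0 then X 0 - e3x p * X 2 else if k = 1 then X 1 - e3y p * X 2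
     else if k = 2 then X 2 else 0)" (is "_ = ?a")
  unfolding frame_coeffs_def
proof (rule the_equality)
  show "(\<forall>k<3. X k = (\<Sum>i<3. ?a i * E p i k)) \<and> (\<forall>i\<ge>3. ?a i = 0)"
    by (auto simp: kmu_frame_eq e3_def sum_lessThan_3 unitv_def less_3_iff)
next
  fix b assume b: "(\<forall>k<3. X k = (\<Sum>i<3. b i * E p i k)) \<and> (\<forall>i\<ge>3. b i = 0)"
  then have "X 0 = b 0 + b 2 * e3x p" "X 1 = b 1 + b 2 * e3y p" "X 2 = b 2"
    by (auto simp: kmu_frame_eq e3_def sum_lessThan_3 unitv_def)
  with b show "b = ?a" by (auto simp: fun_eq_iff)
qed

definition metric :: "vec \<Rightarrow> nat \<Rightarrow> nat \<Rightarrow> real" where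
  "metric p j l = (if j = 0 \<and> l = 0 then 1 else if j = 1 \<and> l = 1 then 1
     else if (j = 0 \<and> l = 2) \<or> (j = 2 \<and> l = 0) then - e3x p
     else if (j = 1 \<and> l = 2) \<or> (j = 2 \<and> l = 1) then - e3y p
     else if j = 2 \<and> l = 2 then e3x p ^ 2 + e3y p ^ 2 + 1 else 0)"

lemma gmat_eq: "gmat E p j l = metric p j l"
  unfolding gmat_def frame_coeffs_eq metric_def
  by (auto simp: sum_lessThan_3 unitv_def power2_eq_square)

definition metric_inv :: "vec \<Rightarrow> nat \<Rightarrow> nat \<Rightarrow> real" where
  "metric_inv p j l = (if j = 0 \<and> l = 0 then 1 + e3x p ^ 2 else if j = 1 \<and> l = 1 then 1 + e3y p ^ 2
     else if (j = 0 \<and> l = 1) \<or> (j = 1 \<and> l = 0) then e3x p * e3y p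
     else if (j = 0 \<and> l = 2) \<or> (j = 2 \<and> l = 0) then e3x p
     else if (j = 1 \<and> l = 2) \<or> (j = 2 \<and> l = 1) then e3y p
     else if j = 2 \<and> l = 2 then 1 else 0)"

lemma metric_inv_inverse:
  assumes "j < 3" "l < 3"
  shows "(\<Sum>m<3. metric p j m * metric_inv p m l) = (if j = l then 1 else 0)"
    and "(\<Sum>m<3. metric_inv p j m * metric p m l) = (if j = l then 1 else 0)"
  using assms unfolding less_3_iff sum_lessThan_3
  by (elim disjE; simp add: metric_def metric_inv_def algebra_simps power2_eq_square)+

lemma ginv_eq: "ginv E p = metric_inv p"
  unfolding ginv_def gmat_eq
proof (rule the_equality)
  show "(\<forall>j<3. \<forall>l<3. (\<Sum>m<3. metric p j m * metric_inv p m l) = (if j = l then 1 else 0))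
      \<and> (\<forall>j l. 3 \<le> j \<or> 3 \<le> l \<longrightarrow> metric_inv p j l = 0)"
    by (simp add: metric_inv_inverse(1)) (auto simp: metric_inv_def)
next
  fix H assume H: "(\<forall>j<3. \<forall>l<3. (\<Sum>m<3. metric p j m * H m l) = (if j = l then 1 else 0))
      \<and> (\<forall>j l. 3 \<le> j \<or> 3 \<le> l \<longrightarrow> H j l = 0)"
  have right_inverse: "(\<Sum>m<3. metric p j m * H m l) = (if j = l then 1 else 0)" if "j < 3" "l < 3" for j l
    using H that by blast
  show "H = metric_inv p"
  proof (intro ext)
    fix j l show "H j l = metric_inv p j l"
    proof (cases "j < 3 \<and> l < 3")
      case True
      then show ?thesis
        using right_inverse_eq_left_inverse[OF metric_inv_inverse(2) right_inverse] by blast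
    next
      case False
      then have "3 \<le> j \<or> 3 \<le> l" by auto
      then show ?thesis using H[THEN conjunct2, rule_format, of j l] by (auto simp: metric_inv_def)
    qed
  qed
qed

definition de3x :: "vec \<Rightarrow> nat \<Rightarrow> real" where
  "de3x p i = (if i = 1 then sg * 2 else if i = 2 then f' (p 2) else 0)"

definition de3y :: "vec \<Rightarrow> nat \<Rightarrow> real" where
  "de3y p i = (if i = 0 then 2 * lam (p 2) else if i = 1 then - a (p 2)
     else if i = 2 then 2 * lam' (p 2) * p 0 - a' (p 2) * p 1 + h' (p 2) else 0)"

lemma e3x_has_derivative:
  assumes "p 2 > 0"
  shows "((\<lambda>t. e3x (p(i := p i + t))) has_real_derivative de3x p i) (at 0)"
proof -
  have "((\<lambda>t. sg * 2 * (p(i := p i + t)) 1 + f ((p(i := p i + t)) 2)) has_real_derivative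
      sg * 2 * (if 1 = i then 1 else 0) + (if i = 2 then f' (p 2) else 0)) (at 0)"
    by (rule derivative_eq_intros has_real_derivative_shift_coordinate
          has_real_derivative_comp_shift_coordinate[where j = 2] f_deriv assms refl)+ simp
  then show ?thesis unfolding e3x_def de3x_def by (cases "i = 1"; cases "i = 2") auto
qed

lemma e3y_has_derivative:
  assumes "p 2 > 0"
  shows "((\<lambda>t. e3y (p(i := p i + t))) has_real_derivative de3y p i) (at 0)"
proof -
  let ?q = "\<lambda>t. p(i := p i + t)"
  have "((\<lambda>t. 2 * lam (?q t 2) * ?q t 0 - a (?q t 2) * ?q t 1 + h (?q t 2)) has_real_derivative
      2 * (if i = 2 then lam' (p 2) else 0) * ?q 0 0 + 2 * lam (?q 0 2) * (if 0 = i then 1 else 0)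
      - ((if i = 2 then a' (p 2) else 0) * ?q 0 1 + a (?q 0 2) * (if 1 = i then 1 else 0))
      + (if i = 2 then h' (p 2) else 0)) (at 0)"
    by (rule derivative_eq_intros has_real_derivative_shift_coordinate
          has_real_derivative_comp_shift_coordinate[where j = 2] lam_deriv a_has_derivative h_deriv assms refl)+ simp
  then show ?thesis unfolding e3y_def de3y_def by (cases "i = 0"; cases "i = 1"; cases "i = 2") auto
qed

definition dmetric :: "vec \<Rightarrow> nat \<Rightarrow> nat \<Rightarrow> nat \<Rightarrow> real" where
  "dmetric p i j l = (if (j = 0 \<and> l = 2) \<or> (j = 2 \<and> l = 0) then - de3x p i
     else if (j = 1 \<and> l = 2) \<or> (j = 2 \<and> l = 1) then - de3y p i
     else if j = 2 \<and> l = 2 then 2 * e3x p * de3x p i + 2 * e3y p * de3y p i else 0)"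

lemma pd_gmat:
  assumes "p 2 > 0" "j < 3" "l < 3"
  shows "pd (\<lambda>q. gmat E q j l) i p = dmetric p i j l"
proof -
  note e3_derivs = e3x_has_derivative[of p i, OF assms(1)] e3y_has_derivative[of p i, OF assms(1)]
  have "((\<lambda>t. metric (p(i := p i + t)) j l) has_real_derivative dmetric p i j l) (at 0)"
    using assms(2,3) unfolding less_3_iff
    by (elim disjE) (auto simp: metric_def dmetric_def intro!: derivative_eq_intros e3_derivs)
  then show ?thesis unfolding gmat_eq by (rule pd_eqI)
qed

definition christoffel_ordered :: "vec \<Rightarrow> nat \<Rightarrow> nat \<Rightarrow> nat \<Rightarrow> real" where
  "christoffel_ordered p i j k =
     (if i = 0 \<and> j = 0 then 0
      else if i = 0 \<and> j = 1 then - (sg + lam (p 2)) * e3 p k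
      else if i = 1 \<and> j = 1 then a (p 2) * e3 p k
      else if i = 0 \<and> j = 2 then (sg - lam (p 2)) * unitv 1 k + e3y p * (sg + lam (p 2)) * e3 p k
      else if i = 1 \<and> j = 2 then (lam (p 2) - sg) * unitv 0 k
         + (e3x p * (lam (p 2) + sg) - a (p 2) * e3y p) * e3 p k
      else if i = 2 \<and> j = 2 then (- f' (p 2) - 2 * e3y p * lam (p 2)) * unitv 0 k
         + (- 2 * sg * e3x p + a (p 2) * e3y p - de3y p 2) * unitv 1 k
         + (- 2 * e3x p * e3y p * (sg + lam (p 2)) + a (p 2) * e3y p ^ 2) * e3 p k
      else 0)"

definition christoffel :: "vec \<Rightarrow> nat \<Rightarrow> nat \<Rightarrow> nat \<Rightarrow> real" where
  "christoffel p k i j = christoffel_ordered p (min i j) (max i j) k"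

lemma christ_eq:
  assumes "p 2 > 0" "k < 3" "i < 3" "j < 3"
  shows "christ E p k i j = christoffel p k i j"
proof -
  have "christ E p k i j
      = (1/2) * (\<Sum>l<3. metric_inv p k l * (dmetric p i j l + dmetric p j i l - dmetric p l i j))"
    unfolding christ_def ginv_eq
    by (intro arg_cong[where f="\<lambda>x. (1/2) * x"] sum.cong refl) (simp add: pd_gmat assms)
  also have "\<dots> = christoffel p k i j"
    using assms(2-4) unfolding less_3_iff sum_lessThan_3
    by (elim disjE; simp add: christoffel_def christoffel_ordered_def metric_inv_def dmetric_def
        de3x_def de3y_def e3_def unitv_def; simp add: algebra_simps power2_eq_square)
  finally show ?thesis .
qed

lemma christ_ge_3: "k \<ge> 3 \<Longrightarrow> christ E p k i j = 0"
  unfolding christ_def ginv_eq by (simp add: metric_inv_def)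

definition de3 :: "vec \<Rightarrow> nat \<Rightarrow> vec" where
  "de3 p i = (\<lambda>l. if l = 0 then de3x p i else if l = 1 then de3y p i else 0)"

(* dchristoffel_yy p i l = d_i Gamma^l_yy and dchristoffel_y p l i = d_y Gamma^l_iy: the only
   derivatives of Christoffel symbols entering R(X, e2) e2. *)
definition dchristoffel_yy :: "vec \<Rightarrow> nat \<Rightarrow> nat \<Rightarrow> real" where
  "dchristoffel_yy p i l = (if i = 2 then a' (p 2) else 0) * e3 p l + a (p 2) * de3 p i l"

definition dchristoffel_y :: "vec \<Rightarrow> nat \<Rightarrow> nat \<Rightarrow> real" where
  "dchristoffel_y p l i =
     (if i = 0 then - (sg + lam (p 2)) * de3 p 1 l
      else if i = 1 then a (p 2) * de3 p 1 l
      else (de3x p 1 * (lam (p 2) + sg) - a (p 2) * de3y p 1) * e3 p l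
        + (e3x p * (lam (p 2) + sg) - a (p 2) * e3y p) * de3 p 1 l)"

lemma pd_christ_yy:
  assumes "p 2 > 0" "l < 3" "i < 3"
  shows "pd (\<lambda>q. christ E q l 1 1) i p = dchristoffel_yy p i l"
proof -
  have "pd (\<lambda>q. christ E q l 1 1) i p = pd (\<lambda>q. christoffel q l 1 1) i p"
    by (rule pd_cong_pos) (use assms christ_eq in auto)
  also have "\<dots> = dchristoffel_yy p i l"
  proof (rule pd_eqI)
    have "((\<lambda>t. a (p 2 + t)) has_real_derivative a' (p 2)) (at 0)"
      using has_real_derivative_comp_shift_coordinate[of a _ p 2 2] a_has_derivative assms(1) by simp
    moreover note e3x_has_derivative[of p, OF assms(1)] e3y_has_derivative[of p, OF assms(1)]
    ultimately show "((\<lambda>t. christoffel (p(i := p i + t)) l 1 1) has_real_derivative dchristoffel_yy p i l) (at 0)"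
      using assms(2,3) unfolding less_3_iff
      by (elim disjE) (auto simp: christoffel_def christoffel_ordered_def e3_def dchristoffel_yy_def de3_def
          intro!: derivative_eq_intros)
  qed
  finally show ?thesis .
qed

lemma pd_christ_y:
  assumes "p 2 > 0" "l < 3" "i < 3"
  shows "pd (\<lambda>q. christ E q l i 1) 1 p = dchristoffel_y p l i"
proof -
  have "pd (\<lambda>q. christ E q l i 1) 1 p = pd (\<lambda>q. christoffel q l i 1) 1 p"
    by (rule pd_cong_pos) (use assms christ_eq in auto)
  also have "\<dots> = dchristoffel_y p l i"
  proof (rule pd_eqI)
    note e3x_has_derivative[of p 1, OF assms(1)] e3y_has_derivative[of p 1, OF assms(1)]
    then show "((\<lambda>t. christoffel (p(1 := p 1 + t)) l i 1) has_real_derivative dchristoffel_y p l i) (at 0)"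
      using assms(2,3) unfolding less_3_iff
      by (elim disjE) (auto simp: christoffel_def christoffel_ordered_def e3_def dchristoffel_y_def de3_def
          unitv_def intro!: derivative_eq_intros)
  qed
  finally show ?thesis .
qed

lemma riem_yy:
  assumes "p 2 > 0" "l < 3" "i < 3"
  shows "riem E p l i 1 1 = dchristoffel_yy p i l - dchristoffel_y p l i
     + (\<Sum>m<3. christoffel p l i m * christoffel p m 1 1 - christoffel p l 1 m * christoffel p m i 1)"
  unfolding riem_def pd_christ_yy[of p l i, OF assms] pd_christ_y[of p l i, OF assms]
  using assms by (intro arg_cong[where f="\<lambda>x. _ + x"] sum.cong refl) (simp add: christ_eq)

lemma tension_gamma_bc:
  assumes "c > 0"
  shows "cov E (gamma_bc b c) (vel (gamma_bc b c)) = (\<lambda>s k. a c * e3 (gamma_bc b c s) k)"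
proof (intro ext)
  fix s k
  have "gamma_bc b c s 2 > 0" using assms by (simp add: gamma_bc_def)
  then show "cov E (gamma_bc b c) (vel (gamma_bc b c)) s k = a c * e3 (gamma_bc b c s) k"
    unfolding cov_def vel_gamma_bc
    by (cases "k < 3") (simp_all add: sum_lessThan_3 unitv_def christ_eq christ_ge_3
        christoffel_def christoffel_ordered_def e3_def gamma_bc_def)
qed

definition cov_tension :: "real \<Rightarrow> vec" where
  "cov_tension c = (\<lambda>k. if k = 0 then a c * (sg + lam c) else if k = 1 then - (a c * a c) else 0)"

lemma cov_tension_gamma_bc:
  assumes "c > 0"
  shows "cov E (gamma_bc b c) (\<lambda>s k. a c * e3 (gamma_bc b c s) k) = (\<lambda>s. cov_tension c)"
proof (intro ext)
  fix s k
  have pos: "gamma_bc b c s 2 > 0" using assms by (simp add: gamma_bc_def)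
  have deriv_e3: "deriv (\<lambda>t. a c * e3 (gamma_bc b c t) k) s =
      (if k = 0 then a c * (sg * 2) else if k = 1 then a c * (- a c) else 0)"
    by (rule DERIV_imp_deriv)
      (auto simp: e3_def e3x_def e3y_def gamma_bc_def intro!: derivative_eq_intros)
  show "cov E (gamma_bc b c) (\<lambda>s k. a c * e3 (gamma_bc b c s) k) s k = cov_tension c k"
  proof (cases "k < 3")
    case True
    with pos show ?thesis
      unfolding cov_def vel_gamma_bc deriv_e3
      by (simp add: less_3_iff sum_lessThan_3 unitv_def christ_eq christoffel_def christoffel_ordered_def
          e3_def cov_tension_def gamma_bc_def; auto simp: algebra_simps)
  next
    case False
    then show ?thesis
      unfolding cov_def vel_gamma_bc deriv_e3 by (simp add: christ_ge_3 cov_tension_def)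
  qed
qed

lemma bitension_gamma_bc:
  assumes "c > 0" "k < 3"
  shows "bitension E (gamma_bc b c) s k
    = a c * (a' c - 2 * a c * a c - 4 - 4 * sg * lam c) * e3 (gamma_bc b c s) k"
proof -
  define p where "p = gamma_bc b c s"
  have pos: "p 2 > 0" and coords: "p 0 = b" "p 1 = s" "p (Suc 0) = s" "p 2 = c"
    using assms(1) by (auto simp: p_def gamma_bc_def)
  define cov3 where "cov3 k = (\<Sum>j<3. christoffel p k 1 j * cov_tension c j)" for k
  define curv3 where "curv3 k = (\<Sum>i<3. (dchristoffel_yy p i k - dchristoffel_y p k i
      + (\<Sum>m<3. christoffel p k i m * christoffel p m 1 1 - christoffel p k 1 m * christoffel p m i 1))
      * (a c * e3 p i))" for k
  have "bitension E (gamma_bc b c) s k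
      = cov E (gamma_bc b c) (\<lambda>s. cov_tension c) s k + curv E p (\<lambda>k. a c * e3 p k) (unitv 1) (unitv 1) k"
    unfolding bitension_def tension_gamma_bc[OF assms(1)] cov_tension_gamma_bc[OF assms(1)]
    unfolding vel_gamma_bc p_def ..
  also have "\<dots> = cov3 k + curv3 k"
    unfolding cov_def curv_def vel_gamma_bc p_def[symmetric] cov3_def curv3_def
    using christ_eq[of p k, OF pos assms(2)] riem_yy[of p k, OF pos assms(2)]
    by (simp add: sum_lessThan_3 unitv_def)
  also have "\<dots> = a c * (a' c - 2 * a c * a c - 4 - 4 * sg * lam c) * e3 p k"
  proof -
    have "sg * sg = 1" using sign by auto
    then have "\<forall>k<3. cov3 k + curv3 k = a c * (a' c - 2 * a c * a c - 4 - 4 * sg * lam c) * e3 p k"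
      unfolding all_less_3 sum_lessThan_3 cov3_def curv3_def
      by (simp add: christoffel_def christoffel_ordered_def dchristoffel_yy_def dchristoffel_y_def
          de3_def de3x_def de3y_def e3_def unitv_def cov_tension_def coords; intro conjI; algebra)
    then show ?thesis using assms(2) by blast
  qed
  finally show ?thesis unfolding p_def .
qed

lemma scaled_e3_eq_zero_iff: "(\<forall>k<3. x * e3 p k = 0) \<longleftrightarrow> x = 0"
proof
  assume "\<forall>k<3. x * e3 p k = 0"
  then have "x * e3 p 2 = 0" by simp
  then show "x = 0" by (simp add: e3_def)
qed simp

lemma geodesic_gamma_bc_iff: "c > 0 \<Longrightarrow> geodesic E (gamma_bc b c) \<longleftrightarrow> a c = 0"
  unfolding geodesic_def tension_gamma_bc scaled_e3_eq_zero_iff by simp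

lemma biharmonic_gamma_bc_iff:
  assumes "c > 0"
  shows "biharmonic E (gamma_bc b c) \<longleftrightarrow> a c = 0 \<or> a' c = 2 * a c * a c + 4 + 4 * sg * lam c"
proof -
  have "biharmonic E (gamma_bc b c) \<longleftrightarrow>
      (\<forall>s. \<forall>k<3. a c * (a' c - 2 * a c * a c - 4 - 4 * sg * lam c) * e3 (gamma_bc b c s) k = 0)"
    unfolding biharmonic_iff_bitension using bitension_gamma_bc[OF assms] by simp
  then show ?thesis unfolding scaled_e3_eq_zero_iff by auto
qed

lemma proper_biharmonic_gamma_bc_iff:
  "c > 0 \<Longrightarrow> proper_biharmonic E (gamma_bc b c) \<longleftrightarrow> a c \<noteq> 0 \<and> a' c = 2 * a c * a c + 4 + 4 * sg * lam c"
  by (auto simp: proper_biharmonic_def biharmonic_gamma_bc_iff geodesic_gamma_bc_iff)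

lemma legendre_curve_gamma_bc: "legendre_curve E (gamma_bc b c)"
  unfolding legendre_curve_def ginner_def gmat_eq vel_gamma_bc kmu_frame_eq
  by (simp add: sum_lessThan_3 unitv_def metric_def)

end

lemma smooth_pos_has_derivative: "smooth_pos g \<Longrightarrow> z > 0 \<Longrightarrow> (g has_real_derivative deriv g z) (at z)"
  unfolding smooth_pos_def by (metis DERIV_deriv_iff_real_differentiable funpow_0)

lemma powr_log_derivative_half:
  fixes n z :: real
  assumes "z > 0"
  shows "deriv (\<lambda>z. z powr (-n)) z / (2 * z powr (-n)) = - n / (2 * z)"
proof -
  have "deriv (\<lambda>z. z powr (-n)) z = - n * z powr (- n - 1)"
    using has_real_derivative_powr[OF assms, of "-n"] by (rule DERIV_imp_deriv)
  then show ?thesis using assms by (simp add: powr_diff field_simps powr_minus)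
qed

lemma generalized_kmu_space_powr:
  fixes n sg :: real
  assumes "sg = 1 \<or> sg = -1" and "smooth_pos f" and "smooth_pos h"
  shows "generalized_kmu_space sg (\<lambda>z. z powr (-n)) f h
    (\<lambda>z. - n * z powr (- n - 1)) (\<lambda>z. n / (2 * z^2)) (deriv f) (deriv h)"
proof
  fix z :: real assume z: "z > 0"
  show "((\<lambda>z. z powr (-n)) has_real_derivative - n * z powr (- n - 1)) (at z)"
    using has_real_derivative_powr[OF z, of "-n"] by simp
  have "\<forall>\<^sub>F x in nhds z. x \<in> {0<..}"
    using z by (intro eventually_nhds_in_open) auto
  then have locally: "\<forall>\<^sub>F x in nhds z. deriv (\<lambda>z. z powr (-n)) x / (2 * x powr (-n)) = - n / (2 * x)"
    by (rule eventually_mono) (simp add: powr_log_derivative_half)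
  have "((\<lambda>x. - n / (2 * x)) has_real_derivative n / (2 * z^2)) (at z)"
    using z by (auto intro!: derivative_eq_intros simp: power2_eq_square field_simps)
  then show "((\<lambda>z. deriv (\<lambda>z. z powr (-n)) z / (2 * z powr (-n))) has_real_derivative n / (2 * z^2)) (at z)"
    using DERIV_cong_ev[OF refl locally refl] by simp
  show "(f has_real_derivative deriv f z) (at z)" "(h has_real_derivative deriv h z) (at z)"
    using z assms(2,3) by (simp_all add: smooth_pos_has_derivative)
qed (fact assms(1))

theorem proper_biharmonic_gamma_bc_powr_iff:
  fixes n sg :: real
  assumes "0 < n" and "sg = 1 \<or> sg = -1" and "smooth_pos f" and "smooth_pos h" and "c > 0"
  shows "proper_biharmonic (kmu_frame sg (\<lambda>z. z powr (-n)) f h) (gamma_bc b c)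
    \<longleftrightarrow> 8 * c^2 * (1 + sg * c powr (-n)) = n * (1 - n)"
proof -
  interpret generalized_kmu_space sg "\<lambda>z. z powr (-n)" f h
      "\<lambda>z. - n * z powr (- n - 1)" "\<lambda>z. n / (2 * z^2)" "deriv f" "deriv h"
    using generalized_kmu_space_powr assms(2-4) .
  have a_c: "a c = - n / (2 * c)"
    using powr_log_derivative_half[OF assms(5)] by (simp add: a_def)
  have "n / (2 * c^2) = 2 * a c * a c + 4 + 4 * sg * c powr (-n)
      \<longleftrightarrow> 8 * c^2 * (1 + sg * c powr (-n)) = n * (1 - n)"
    using assms(5) by (simp add: a_c field_simps power2_eq_square) (auto simp: algebra_simps)
  moreover have "a c \<noteq> 0" using assms(1,5) by (simp add: a_c)
  ultimately show ?thesis
    using proper_biharmonic_gamma_bc_iff[OF assms(5)] by simp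
qed

lemma ex_pos_level_point:
  fixes g :: "real \<Rightarrow> real"
  assumes "continuous_on {0<..} g" and "0 < u" "0 < v" and "g u \<le> y" "y \<le> g v"
  shows "\<exists>x>0. g x = y"
proof (cases "u \<le> v")
  case True
  with assms obtain x where "u \<le> x" "x \<le> v" "g x = y"
    using IVT'[of g u y v] continuous_on_subset[OF assms(1), of "{u..v}"] by force
  then show ?thesis using \<open>0 < u\<close> by (intro exI[of _ x]) auto
next
  case False
  with assms obtain x where "v \<le> x" "x \<le> u" "g x = y"
    using IVT2'[of g u y v] continuous_on_subset[OF assms(1), of "{v..u}"] by force
  then show ?thesis using \<open>0 < v\<close> by (intro exI[of _ x]) auto
qed

lemma ex_pos_solution_height_equation:
  fixes n sg :: real
  assumes "0 < n" and "n < 1" and "sg = 1 \<or> sg = -1"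
  shows "\<exists>c>0. 8 * c^2 * (1 + sg * c powr (-n)) = n * (1 - n)"
proof -
  define g where "g c = 8 * c^2 * (1 + sg * c powr (-n))" for c :: real
  have "continuous_on {0<..} g"
    unfolding g_def by (intro continuous_intros) auto
  moreover have "0 < n * (1 - n)" "n * (1 - n) \<le> 1"
    using assms(1,2) by (auto intro: mult_le_one)
  ultimately show ?thesis
    using assms(3)
  proof (elim disjE)
    assume "sg = 1"
    define u where "u = n * (1 - n) / 16"
    have u: "0 < u" "u \<le> 1" using \<open>0 < n * (1 - n)\<close> \<open>n * (1 - n) \<le> 1\<close> by (auto simp: u_def)
    have "u^2 * u powr (-n) = u powr (2 - n)"
      using u by (simp add: powr_diff powr_minus divide_simps powr_realpow[symmetric] power2_eq_square)
    also have "\<dots> \<le> u" using u assms(2) by (intro powr_le_one_le) auto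
    finally have "u^2 * u powr (-n) \<le> u" .
    moreover have "u^2 \<le> u" using u by (simp add: power2_eq_square mult_le_cancel_left1)
    moreover have "g u = 8 * u^2 + 8 * (u^2 * u powr (-n))" by (simp add: g_def \<open>sg = 1\<close> algebra_simps)
    ultimately have "g u \<le> 16 * u" by linarith
    then have "g u \<le> n * (1 - n)" by (simp add: u_def)
    moreover have "n * (1 - n) \<le> g 1" using \<open>n * (1 - n) \<le> 1\<close> by (simp add: g_def \<open>sg = 1\<close>)
    ultimately show ?thesis
      using ex_pos_level_point[OF \<open>continuous_on {0<..} g\<close> \<open>0 < u\<close>, of 1] by (auto simp: g_def)
  next
    assume "sg = -1"
    define v where "v = (2::real) powr (1 / n)"
    have "1 \<le> v" unfolding v_def using assms(1) by (intro ge_one_powr_ge_zero) auto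
    have "v powr (-n) = 1/2"
      unfolding v_def using assms(1) by (simp add: powr_powr powr_minus)
    then have "g v = 4 * v^2" by (simp add: g_def \<open>sg = -1\<close>)
    moreover have "1 \<le> v^2" using \<open>1 \<le> v\<close> by (simp add: one_le_power)
    ultimately have "n * (1 - n) \<le> g v" using \<open>n * (1 - n) \<le> 1\<close> by linarith
    moreover have "g 1 \<le> n * (1 - n)" using \<open>0 < n * (1 - n)\<close> by (simp add: g_def \<open>sg = -1\<close>)
    ultimately show ?thesis
      using ex_pos_level_point[OF \<open>continuous_on {0<..} g\<close>, of 1 v] \<open>1 \<le> v\<close> by (auto simp: g_def)
  qed
qed

theorem mainTheorem2:
  fixes n sg :: real
  assumes "0 < n" and "n < 1" and "sg = 1 \<or> sg = -1"
  shows "(\<exists>c>0. 8 * c^2 * (1 + sg * c powr (-n)) = n * (1 - n)) \<and>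
         (\<forall>c b f h. c > 0 \<longrightarrow> 8 * c^2 * (1 + sg * c powr (-n)) = n * (1 - n)
            \<longrightarrow> smooth_pos f \<longrightarrow> smooth_pos h
            \<longrightarrow> legendre_curve (kmu_frame sg (\<lambda>z. z powr (-n)) f h) (gamma_bc b c)
              \<and> proper_biharmonic (kmu_frame sg (\<lambda>z. z powr (-n)) f h) (gamma_bc b c))"
proof (intro conjI allI impI)
  show "\<exists>c>0. 8 * c^2 * (1 + sg * c powr (-n)) = n * (1 - n)"
    using ex_pos_solution_height_equation[OF assms] .
next
  fix c b :: real and f h :: "real \<Rightarrow> real"
  assume "c > 0" and "8 * c^2 * (1 + sg * c powr (-n)) = n * (1 - n)"
    and "smooth_pos f" and "smooth_pos h"
  then show "legendre_curve (kmu_frame sg (\<lambda>z. z powr (-n)) f h) (gamma_bc b c)"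
    and "proper_biharmonic (kmu_frame sg (\<lambda>z. z powr (-n)) f h) (gamma_bc b c)"
    using generalized_kmu_space.legendre_curve_gamma_bc[OF generalized_kmu_space_powr]
      proper_biharmonic_gamma_bc_powr_iff assms by blast+
qed

end
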